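(* Let $m=1$, with adjoint field $c^*$, let $c_{\lim}<0$, $k>0$, $\beta\ge0$, $$\mathcal S=\{S\in\mathcal M^+: S\{c^*<k\}\ge\beta S\{c^*\ge k\}\},\qquad M_{\lim}=\frac{-c_{\lim}}{k+\beta\inf c^*}.$$ Then $\{c^*\ge k\}$ is a prior $(S^*,-c_{\lim},\mathcal S,M_{\lim})$-footprint and a posterior $(S^*,c_{\lim},\mathcal S,M_{\lim})$-zero footprint. (If $\beta=0$ then $\mathcal S=\mathcal M^+$.)
   Context: Let $T\subset\mathbb{R}$ be a time interval, $V\subset\mathbb{R}^3$ a spatial domain, and $\mathcal M^+$ the set of positive measures on the Borel sets of $T\times V$. A measurement tuple consists of $m\ge1$ nonnegative measurable functions $c_1^*,\dots,c_m^*$ on $T\times V$ (the adjoint concentration fields $c_j^*(s,y)=\int_{T\times V}p(t,x;s,y)\,dS_j^*(t,x)$ of sensor probability measures $S_j^*$, $p$ being the transition probability of the dispersion; we write $S^*=(S_1^*,\dots,S_m^* )$) together with a vector $c_{\lim}=(c_{\lim,1},\dots,c_{\lim,m})$ of nonzero reals. Write $\langle S,c^*\rangle=\int c^*\,dS$. A measure $S\in\mathcal M^+$ satisfies the measurement condition for $(S^*,c_{\lim})$ if for every $j$: $\langle S,c_j^*\rangle\ge c_{\lim,j}$ when $c_{\lim,j}>0$ (detection), and $\langle S,c_j^*\rangle<|c_{\lim,j}|$ when $c_{\lim,j}<0$ (non-detection). Given an admissible class $\mathcal S\subseteq\mathcal M^+$ and $M_{\lim}\in\mathbb R$, a measurable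 set $A\subseteq T\times V$ is: a posterior $(S^*,c_{\lim},\mathcal S,M_{\lim})$-footprint if every $S\in\mathcal S$ satisfying the measurement condition has $S(A)\ge M_{\lim}$; a prior $(S^*,c_{\lim},\mathcal S,M_{\lim})$-footprint if every $S\in\mathcal S$ with $S(A)\ge M_{\lim}$ satisfies the measurement condition; a posterior $(S^*,c_{\lim},\mathcal S,M_{\lim})$-zero footprint if every $S\in\mathcal S$ satisfying the measurement condition has $S(A)<M_{\lim}$; a prior $(S^*,c_{\lim},\mathcal S,M_{\lim})$-zero footprint if every $S\in\mathcal S$ with $S(A)<M_{\lim}$ satisfies the measurement condition. Suprema, infima and level sets $\{c^*\ge k\}=\{(s,y):c^*(s,y)\ge k\}$ are over $T\times V$. *)

theory Defs
  imports "HOL-Analysis.Analysis"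
begin

type_synonym pt = "real \<times> (real^3)"

definition Mplus :: "real set \<Rightarrow> (real^3) set \<Rightarrow> pt measure set" where
  "Mplus T V = {S. sets S = sets (restrict_space borel (T \<times> V))}"

definition pairing :: "pt measure \<Rightarrow> (pt \<Rightarrow> real) \<Rightarrow> ennreal" where
  "pairing S f = (\<integral>\<^sup>+ x. ennreal (f x) \<partial>S)"

definition meas_cond :: "nat \<Rightarrow> (nat \<Rightarrow> pt \<Rightarrow> real) \<Rightarrow> (nat \<Rightarrow> real) \<Rightarrow> pt measure \<Rightarrow> bool" where
  "meas_cond m cs cl S =
     (\<forall>j<m. (cl j > 0 \<longrightarrow> pairing S (cs j) \<ge> ennreal (cl j)) \<and>
            (cl j < 0 \<longrightarrow> pairing S (cs j) < ennreal \<bar>cl j\<bar>))"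

definition posterior_footprint ::
  "nat \<Rightarrow> (nat \<Rightarrow> pt \<Rightarrow> real) \<Rightarrow> (nat \<Rightarrow> real) \<Rightarrow> pt measure set \<Rightarrow> real \<Rightarrow> pt set \<Rightarrow> bool" where
  "posterior_footprint m cs cl Sc Mlim A =
     (\<forall>S\<in>Sc. meas_cond m cs cl S \<longrightarrow> emeasure S A \<ge> ennreal Mlim)"

definition prior_footprint ::
  "nat \<Rightarrow> (nat \<Rightarrow> pt \<Rightarrow> real) \<Rightarrow> (nat \<Rightarrow> real) \<Rightarrow> pt measure set \<Rightarrow> real \<Rightarrow> pt set \<Rightarrow> bool" where
  "prior_footprint m cs cl Sc Mlim A =
     (\<forall>S\<in>Sc. emeasure S A \<ge> ennreal Mlim \<longrightarrow> meas_cond m cs cl S)"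

definition posterior_zero_footprint ::
  "nat \<Rightarrow> (nat \<Rightarrow> pt \<Rightarrow> real) \<Rightarrow> (nat \<Rightarrow> real) \<Rightarrow> pt measure set \<Rightarrow> real \<Rightarrow> pt set \<Rightarrow> bool" where
  "posterior_zero_footprint m cs cl Sc Mlim A =
     (\<forall>S\<in>Sc. meas_cond m cs cl S \<longrightarrow> emeasure S A < ennreal Mlim)"

definition prior_zero_footprint ::
  "nat \<Rightarrow> (nat \<Rightarrow> pt \<Rightarrow> real) \<Rightarrow> (nat \<Rightarrow> real) \<Rightarrow> pt measure set \<Rightarrow> real \<Rightarrow> pt set \<Rightarrow> bool" where
  "prior_zero_footprint m cs cl Sc Mlim A =
     (\<forall>S\<in>Sc. emeasure S A < ennreal Mlim \<longrightarrow> meas_cond m cs cl S)"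

end

theory Submission
  imports Defs
begin

(* Write A = {c* >= k} and B = {c* < k} inside T x V, and
   L = inf c*.  On A the field is at least k, on B at least L, so
     <S,c*> >= k S(A) + L S(B) >= (k + beta L) S(A)
   for every measure S in the admissible class (which requires S(B) >= beta S(A)).
   Hence S(A) >= M_lim forces <S,c*> >= (k + beta L) M_lim = -c_lim, which is
   exactly detection for the limit -c_lim (prior footprint), and, read
   contrapositively, non-detection for the limit c_lim forces S(A) < M_lim
   (posterior zero footprint). *)

lemma nn_integral_ge_threshold_mass:
  fixes M :: "'a measure" and c :: "'a \<Rightarrow> real"
  assumes c_meas: "c \<in> borel_measurable M"
    and lower: "\<And>x. x \<in> space M \<Longrightarrow> L \<le> c x"
    and "0 \<le> L" and "0 \<le> k" and "0 \<le> \<beta>"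
    and ratio: "ennreal \<beta> * emeasure M {x\<in>space M. k \<le> c x} \<le> emeasure M {x\<in>space M. c x < k}"
  shows "ennreal (k + \<beta> * L) * emeasure M {x\<in>space M. k \<le> c x} \<le> (\<integral>\<^sup>+ x. ennreal (c x) \<partial>M)"
proof -
  define A where "A = {x\<in>space M. k \<le> c x}"
  define B where "B = {x\<in>space M. c x < k}"
  have A_meas: "A \<in> sets M" and B_meas: "B \<in> sets M"
    unfolding A_def B_def using c_meas by measurable
  have "ennreal (k + \<beta> * L) * emeasure M A = ennreal k * emeasure M A + ennreal L * (ennreal \<beta> * emeasure M A)"
    using assms(3-5) by (simp add: ennreal_plus ennreal_mult distrib_right algebra_simps)
  also have "\<dots> \<le> ennreal k * emeasure M A + ennreal L * emeasure M B"
    using ratio unfolding A_def B_def by (intro add_left_mono mult_left_mono) auto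
  also have "\<dots> = (\<integral>\<^sup>+ x. ennreal k * indicator A x + ennreal L * indicator B x \<partial>M)"
    using A_meas B_meas by (simp add: nn_integral_add nn_integral_cmult_indicator)
  also have "\<dots> \<le> (\<integral>\<^sup>+ x. ennreal (c x) \<partial>M)"
  proof (rule nn_integral_mono)
    fix x assume x: "x \<in> space M"
    show "ennreal k * indicator A x + ennreal L * indicator B x \<le> ennreal (c x)"
      using x lower[OF x] by (cases "c x < k") (auto simp: A_def B_def indicator_def ennreal_leI)
  qed
  finally show ?thesis unfolding A_def .
qed

lemma Mplus_space_and_measurable:
  assumes "S \<in> Mplus T V" and "c \<in> borel_measurable (restrict_space borel (T \<times> V))"
  shows "space S = T \<times> V" and "c \<in> borel_measurable S"
proof -
  have sets_S: "sets S = sets (restrict_space borel (T \<times> V))"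
    using assms(1) unfolding Mplus_def by simp
  show "space S = T \<times> V"
    using sets_eq_imp_space_eq[OF sets_S] by (simp add: space_restrict_space)
  show "c \<in> borel_measurable S"
    using assms(2) measurable_cong_sets[OF sets_S refl, of borel] by (metis (no_types))
qed

lemma Inf_image_nonneg_lower_bound:
  fixes c :: "'a \<Rightarrow> real"
  assumes "X \<noteq> {}" and "\<forall>x\<in>X. c x \<ge> 0"
  shows "0 \<le> Inf (c ` X)" and "\<And>x. x \<in> X \<Longrightarrow> Inf (c ` X) \<le> c x"
proof -
  have "bdd_below (c ` X)" using assms(2) by (auto intro!: bdd_belowI[of _ 0])
  then show "\<And>x. x \<in> X \<Longrightarrow> Inf (c ` X) \<le> c x" by (auto intro: cInf_lower)
  show "0 \<le> Inf (c ` X)" using assms by (auto intro!: cInf_greatest)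
qed

lemma meas_cond_single_sensor:
  "meas_cond 1 (\<lambda>_. c) (\<lambda>_. a) S \<longleftrightarrow>
     (a > 0 \<longrightarrow> pairing S c \<ge> ennreal a) \<and> (a < 0 \<longrightarrow> pairing S c < ennreal \<bar>a\<bar>)"
  unfolding meas_cond_def by simp

theorem mainTheorem8:
  fixes T :: "real set" and V :: "(real^3) set" and c :: "pt \<Rightarrow> real"
    and c_lim k \<beta> :: real
  assumes "T \<noteq> {}" and "V \<noteq> {}"
    and "c \<in> borel_measurable (restrict_space borel (T \<times> V))"
    and "\<forall>x\<in>T \<times> V. c x \<ge> 0"
    and "c_lim < 0" and "k > 0" and "\<beta> \<ge> 0"
  defines "Sc \<equiv> {S\<in>Mplus T V.
              emeasure S {x\<in>T \<times> V. c x < k} \<ge> ennreal \<beta> * emeasure S {x\<in>T \<times> V. c x \<ge> k}}"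
    and "M_lim \<equiv> - c_lim / (k + \<beta> * Inf (c ` (T \<times> V)))"
  shows "prior_footprint 1 (\<lambda>_. c) (\<lambda>_. - c_lim) Sc M_lim {x\<in>T \<times> V. c x \<ge> k}
       \<and> posterior_zero_footprint 1 (\<lambda>_. c) (\<lambda>_. c_lim) Sc M_lim {x\<in>T \<times> V. c x \<ge> k}"
proof -
  define L where "L = Inf (c ` (T \<times> V))"
  have L_nonneg: "0 \<le> L" and L_lower: "\<And>x. x \<in> T \<times> V \<Longrightarrow> L \<le> c x"
    using Inf_image_nonneg_lower_bound[of "T \<times> V" c] assms(1,2,4) unfolding L_def by auto
  have denominator_pos: "0 < k + \<beta> * L"
    using assms(6,7) L_nonneg by (simp add: add_pos_nonneg)
  have M_lim_scaled: "(k + \<beta> * L) * M_lim = - c_lim" and "0 \<le> M_lim"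
    using assms(5) denominator_pos unfolding M_lim_def L_def[symmetric] by (simp_all add: divide_nonpos_pos)
  have detection: "ennreal (- c_lim) \<le> pairing S c"
    if S: "S \<in> Sc" and mass: "ennreal M_lim \<le> emeasure S {x\<in>T \<times> V. c x \<ge> k}" for S
  proof -
    have space_S: "space S = T \<times> V" and c_meas: "c \<in> borel_measurable S"
      using Mplus_space_and_measurable[OF _ assms(3)] S unfolding Sc_def by auto
    have "ennreal (- c_lim) = ennreal (k + \<beta> * L) * ennreal M_lim"
      using M_lim_scaled \<open>0 \<le> M_lim\<close> denominator_pos by (simp add: ennreal_mult[symmetric])
    also have "\<dots> \<le> ennreal (k + \<beta> * L) * emeasure S {x\<in>T \<times> V. c x \<ge> k}"
      using mass by (rule mult_left_mono) simp
    also have "\<dots> \<le> pairing S c"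
      unfolding pairing_def
      using nn_integral_ge_threshold_mass[OF c_meas _ L_nonneg _ assms(7)] S L_lower assms(6)
      unfolding space_S Sc_def by auto
    finally show ?thesis .
  qed
  show ?thesis
    unfolding prior_footprint_def posterior_zero_footprint_def meas_cond_single_sensor
    using detection assms(5) by (auto simp: not_less[symmetric])
qed

end
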